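(* Let $D$ be a non-commutative division ring and $R$ a maximal subring of $D$. Assume there exists a nonzero non-unit $a\in R$ with $aR=Ra$. Then: (1) $X=\{1,a,a^2,\ldots\}$ is a left and right Ore set in $R$, and $D=X^{-1}R=\{a^{-n}r: n\ge 0, r\in R\}$ and $D=RX^{-1}=\{ra^{-n}: n\ge 0, r\in R\}$; (2) every nonzero left ideal and every nonzero right ideal of $R$ contains a power of $a$; in particular $u.\dim({}_RR)=u.\dim(R_R)=1$ and $R$ is an Ore domain whose division ring of quotients is $D$; (3) every nonzero prime ideal of $R$ contains $a$; (4) $a\in J(R)$; (5) $R$ is a non-simple $G$-domain; (6) for every $\lambda\in N(R)$, either $\lambda\in R$ or $\lambda^{-1}\in R$.
   Context: All rings are associative unital and subrings share the identity. A maximal subring of a ring $T$ is a proper subring maximal under inclusion among proper subrings of $T$. $J(R)$ is the Jacobson radical, $u.\dim$ is uniform (Goldie) dimension. $N(R)=\{x\in D: xR=Rx\}$. A $G$-domain is a domain in which the intersection of all nonzero prime ideals is nonzero. *)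

theory Defs
  imports Main "HOL-Library.Extended_Nat"
begin

text \<open>All notions are relative to a subset R of a division ring (the type 'a),
  with the ring operations inherited from 'a (subrings share the identity).\<close>

definition subring :: "'a::division_ring set \<Rightarrow> bool" where
  "subring S \<longleftrightarrow> 0 \<in> S \<and> 1 \<in> S \<and> (\<forall>x\<in>S. \<forall>y\<in>S. x + y \<in> S \<and> x * y \<in> S) \<and> (\<forall>x\<in>S. - x \<in> S)"

definition maximal_subring :: "'a::division_ring set \<Rightarrow> bool" where
  "maximal_subring R \<longleftrightarrow> subring R \<and> R \<noteq> UNIV \<and>
     (\<forall>S. subring S \<and> R \<subseteq> S \<and> S \<noteq> UNIV \<longrightarrow> S = R)"

definition left_ideal :: "'a::division_ring set \<Rightarrow> 'a set \<Rightarrow> bool" where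
  "left_ideal R I \<longleftrightarrow> I \<subseteq> R \<and> 0 \<in> I \<and> (\<forall>x\<in>I. \<forall>y\<in>I. x + y \<in> I) \<and> (\<forall>x\<in>I. - x \<in> I)
     \<and> (\<forall>r\<in>R. \<forall>x\<in>I. r * x \<in> I)"

definition right_ideal :: "'a::division_ring set \<Rightarrow> 'a set \<Rightarrow> bool" where
  "right_ideal R I \<longleftrightarrow> I \<subseteq> R \<and> 0 \<in> I \<and> (\<forall>x\<in>I. \<forall>y\<in>I. x + y \<in> I) \<and> (\<forall>x\<in>I. - x \<in> I)
     \<and> (\<forall>r\<in>R. \<forall>x\<in>I. x * r \<in> I)"

definition two_sided_ideal :: "'a::division_ring set \<Rightarrow> 'a set \<Rightarrow> bool" where
  "two_sided_ideal R I \<longleftrightarrow> left_ideal R I \<and> right_ideal R I"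

text \<open>Prime ideal: proper two-sided ideal P such that AB \<subseteq> P implies A \<subseteq> P or B \<subseteq> P
  for two-sided ideals A, B (AB \<subseteq> P iff all products lie in P, as P is additively closed).\<close>
definition prime_ideal :: "'a::division_ring set \<Rightarrow> 'a set \<Rightarrow> bool" where
  "prime_ideal R P \<longleftrightarrow> two_sided_ideal R P \<and> P \<noteq> R \<and>
     (\<forall>A B. two_sided_ideal R A \<and> two_sided_ideal R B \<and> (\<forall>x\<in>A. \<forall>y\<in>B. x * y \<in> P)
        \<longrightarrow> A \<subseteq> P \<or> B \<subseteq> P)"

definition maximal_left_ideal :: "'a::division_ring set \<Rightarrow> 'a set \<Rightarrow> bool" where
  "maximal_left_ideal R M \<longleftrightarrow> left_ideal R M \<and> M \<noteq> R \<and>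
     (\<forall>I. left_ideal R I \<and> M \<subseteq> I \<and> I \<noteq> R \<longrightarrow> I = M)"

definition jacobson :: "'a::division_ring set \<Rightarrow> 'a set" where
  "jacobson R = R \<inter> \<Inter> {M. maximal_left_ideal R M}"

definition simple_ring :: "'a::division_ring set \<Rightarrow> bool" where
  "simple_ring R \<longleftrightarrow> R \<noteq> {0} \<and> (\<forall>I. two_sided_ideal R I \<longrightarrow> I = {0} \<or> I = R)"

definition G_domain :: "'a::division_ring set \<Rightarrow> bool" where
  "G_domain R \<longleftrightarrow> R \<noteq> {0} \<and> (\<forall>x\<in>R. \<forall>y\<in>R. x * y = 0 \<longrightarrow> x = 0 \<or> y = 0) \<and>
     R \<inter> \<Inter> {P. prime_ideal R P \<and> P \<noteq> {0}} \<noteq> {0}"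

definition udim_left :: "'a::division_ring set \<Rightarrow> enat" where
  "udim_left R = Sup {enat n | n. \<exists>I :: nat \<Rightarrow> 'a set.
      (\<forall>i<n. left_ideal R (I i) \<and> I i \<noteq> {0}) \<and>
      (\<forall>x. (\<forall>i<n. x i \<in> I i) \<and> (\<Sum>i<n. x i) = 0 \<longrightarrow> (\<forall>i<n. x i = 0))}"

definition udim_right :: "'a::division_ring set \<Rightarrow> enat" where
  "udim_right R = Sup {enat n | n. \<exists>I :: nat \<Rightarrow> 'a set.
      (\<forall>i<n. right_ideal R (I i) \<and> I i \<noteq> {0}) \<and>
      (\<forall>x. (\<forall>i<n. x i \<in> I i) \<and> (\<Sum>i<n. x i) = 0 \<longrightarrow> (\<forall>i<n. x i = 0))}"

definition left_ore_set :: "'a::division_ring set \<Rightarrow> 'a set \<Rightarrow> bool" where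
  "left_ore_set R X \<longleftrightarrow> X \<subseteq> R \<and> 1 \<in> X \<and> (\<forall>s\<in>X. \<forall>t\<in>X. s * t \<in> X) \<and>
     (\<forall>r\<in>R. \<forall>s\<in>X. \<exists>s'\<in>X. \<exists>r'\<in>R. s' * r = r' * s) \<and>
     (\<forall>r\<in>R. \<forall>s\<in>X. r * s = 0 \<longrightarrow> (\<exists>s'\<in>X. s' * r = 0))"

definition right_ore_set :: "'a::division_ring set \<Rightarrow> 'a set \<Rightarrow> bool" where
  "right_ore_set R X \<longleftrightarrow> X \<subseteq> R \<and> 1 \<in> X \<and> (\<forall>s\<in>X. \<forall>t\<in>X. s * t \<in> X) \<and>
     (\<forall>r\<in>R. \<forall>s\<in>X. \<exists>s'\<in>X. \<exists>r'\<in>R. r * s' = s * r') \<and>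
     (\<forall>r\<in>R. \<forall>s\<in>X. s * r = 0 \<longrightarrow> (\<exists>s'\<in>X. r * s' = 0))"

text \<open>R is a (left and right) Ore domain whose (classical) division ring of quotients is
  the ambient division ring D = UNIV: every element of D is s^{-1} r and also r s^{-1}.\<close>
definition ore_domain_with_quotients_D :: "'a::division_ring set \<Rightarrow> bool" where
  "ore_domain_with_quotients_D R \<longleftrightarrow>
     R \<noteq> {0} \<and> (\<forall>x\<in>R. \<forall>y\<in>R. x * y = 0 \<longrightarrow> x = 0 \<or> y = 0) \<and>
     (\<forall>x\<in>R. \<forall>y\<in>R. x \<noteq> 0 \<and> y \<noteq> 0 \<longrightarrow> (\<exists>u\<in>R. \<exists>v\<in>R. u * x = v * y \<and> u * x \<noteq> 0)) \<and>
     (\<forall>x\<in>R. \<forall>y\<in>R. x \<noteq> 0 \<and> y \<noteq> 0 \<longrightarrow> (\<exists>u\<in>R. \<exists>v\<in>R. x * u = y * v \<and> x * u \<noteq> 0)) \<and>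
     (\<forall>d. \<exists>s\<in>R. \<exists>r\<in>R. s \<noteq> 0 \<and> d = inverse s * r) \<and>
     (\<forall>d. \<exists>s\<in>R. \<exists>r\<in>R. s \<noteq> 0 \<and> d = r * inverse s)"

definition normalizer :: "'a::division_ring set \<Rightarrow> 'a set" where
  "normalizer R = {x. (\<lambda>r. x * r) ` R = (\<lambda>r. r * x) ` R}"

end

theory Submission
  imports Defs
begin

(* Since a normalises R, the set of fractions a^-n r is a subring; it contains R and a^-1,
   which is not in R, so by maximality it is all of D, and symmetrically D = {r a^-n}.
   Hence every nonzero x satisfies r x = a^n and x r' = a^m for some r, r' in R: every
   nonzero one-sided ideal contains all large powers of a. This gives the Ore conditions and
   uniform dimension 1, and, since (Ra)(Ra^n) lies in Ra^(n+1), puts a into every nonzero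
   prime ideal. Writing (1 - r a)^-1 = a^-n s and cancelling factors of a shows that 1 - r a
   is a unit of R, so a lies in J(R) and Ra is a proper nonzero ideal. Finally, if a
   normalising l had neither l nor l^-1 in R, maximality would give R[l] = R[l^-1] = D, and
   1 would be a polynomial both in l and in l^-1 with coefficients in Ra; the degree-lowering
   argument behind the existence of valuation rings rules this out. *)

section \<open>Subrings and normalising elements\<close>

lemma
  assumes "subring R"
  shows subring_0: "0 \<in> R" and subring_1: "1 \<in> R"
    and subring_add: "x \<in> R \<Longrightarrow> y \<in> R \<Longrightarrow> x + y \<in> R"
    and subring_mult: "x \<in> R \<Longrightarrow> y \<in> R \<Longrightarrow> x * y \<in> R"
    and subring_uminus: "x \<in> R \<Longrightarrow> - x \<in> R"
  using assms by (auto simp: subring_def)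

lemma subring_power: "subring R \<Longrightarrow> x \<in> R \<Longrightarrow> x ^ n \<in> R"
  by (induction n) (auto simp: subring_1 subring_mult)

lemma normalizer_iff:
  "x \<in> normalizer R \<longleftrightarrow> (\<forall>r\<in>R. \<exists>s\<in>R. x * r = s * x) \<and> (\<forall>r\<in>R. \<exists>s\<in>R. r * x = x * s)"
  unfolding normalizer_def by (auto simp: image_def)

lemma normalizer_commute_left: "x \<in> normalizer R \<Longrightarrow> r \<in> R \<Longrightarrow> \<exists>s\<in>R. x * r = s * x"
  by (simp add: normalizer_iff)

lemma normalizer_commute_right: "x \<in> normalizer R \<Longrightarrow> r \<in> R \<Longrightarrow> \<exists>s\<in>R. r * x = x * s"
  by (simp add: normalizer_iff)

lemma normalizer_power:
  assumes "x \<in> normalizer R"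
  shows "x ^ n \<in> normalizer R"
proof (induction n)
  case 0
  show ?case by (auto simp: normalizer_iff)
next
  case (Suc n)
  have "\<exists>s\<in>R. x ^ Suc n * r = s * x ^ Suc n" if r: "r \<in> R" for r
  proof -
    obtain s where "s \<in> R" "x ^ n * r = s * x ^ n"
      using normalizer_commute_left[OF Suc.IH r] by blast
    moreover obtain t where "t \<in> R" "x * s = t * x"
      using normalizer_commute_left[OF assms \<open>s \<in> R\<close>] by blast
    ultimately show ?thesis by (metis mult.assoc power_Suc)
  qed
  moreover have "\<exists>s\<in>R. r * x ^ Suc n = x ^ Suc n * s" if r: "r \<in> R" for r
  proof -
    obtain s where "s \<in> R" "r * x = x * s"
      using normalizer_commute_right[OF assms r] by blast
    moreover obtain t where "t \<in> R" "s * x ^ n = x ^ n * t"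
      using normalizer_commute_right[OF Suc.IH \<open>s \<in> R\<close>] by blast
    ultimately show ?thesis by (metis mult.assoc power_Suc)
  qed
  ultimately show ?case by (simp add: normalizer_iff)
qed

lemma inverse_mult_cancel_left [simp]:
  fixes x :: "'a::division_ring"
  shows "x \<noteq> 0 \<Longrightarrow> inverse x * (x * y) = y"
  by (simp flip: mult.assoc)

lemma intertwines_inverse:
  fixes x :: "'a::division_ring"
  assumes "x * r = s * x"
  shows "r * inverse x = inverse x * s"
proof (cases "x = 0")
  case False
  have "r * inverse x = inverse x * (x * r) * inverse x" using False by simp
  also have "\<dots> = inverse x * s" using False by (simp add: assms mult.assoc)
  finally show ?thesis .
qed simp

lemma normalizer_inverse:
  fixes x :: "'a::division_ring"
  assumes "x \<in> normalizer R"
  shows "inverse x \<in> normalizer R"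
  using assms intertwines_inverse unfolding normalizer_iff by metis

lemma inverse_power_add:
  fixes a :: "'a::division_ring"
  shows "inverse (a ^ (m + n)) = inverse (a ^ m) * inverse (a ^ n)"
  by (metis power_add power_inverse)

lemma two_sided_ideal_normal_principal:
  assumes R: "subring R" and x: "x \<in> R" "x \<in> normalizer R"
  shows "two_sided_ideal R {r * x | r. r \<in> R}" (is "two_sided_ideal R ?I")
proof -
  have sub: "?I \<subseteq> R" using x subring_mult[OF R] by blast
  have zero: "0 \<in> ?I" using subring_0[OF R] mult_zero_left[of x, symmetric] by blast
  have add: "\<forall>y\<in>?I. \<forall>z\<in>?I. y + z \<in> ?I"
    using subring_add[OF R] by (auto simp flip: distrib_right)
  have uminus: "\<forall>y\<in>?I. - y \<in> ?I"
    using subring_uminus[OF R] by (auto simp flip: mult_minus_left)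
  have left: "\<forall>t\<in>R. \<forall>y\<in>?I. t * y \<in> ?I"
    using subring_mult[OF R] by (auto simp flip: mult.assoc)
  have right: "\<forall>t\<in>R. \<forall>y\<in>?I. y * t \<in> ?I"
  proof (intro ballI)
    fix t y assume "t \<in> R" "y \<in> ?I"
    then obtain r where r: "r \<in> R" "y = r * x" by blast
    obtain u where u: "u \<in> R" "x * t = u * x"
      using normalizer_commute_left[OF x(2) \<open>t \<in> R\<close>] by blast
    have "y * t = (r * u) * x" using r u by (simp add: mult.assoc)
    then show "y * t \<in> ?I" using subring_mult[OF R r(1) u(1)] by blast
  qed
  show ?thesis unfolding two_sided_ideal_def left_ideal_def right_ideal_def
    using sub zero add uminus left right by blast
qed

lemma subring_left_fractions:
  fixes a :: "'a::division_ring"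
  assumes R: "subring R" and a: "a \<in> R" "a \<noteq> 0" "a \<in> normalizer R"
  shows "subring {inverse (a ^ n) * r | n r. r \<in> R}" (is "subring ?F")
  unfolding subring_def
proof (intro conjI ballI)
  have "0 = inverse (a ^ 0) * 0" "1 = inverse (a ^ 0) * 1" by simp_all
  then show "0 \<in> ?F" "1 \<in> ?F" using subring_0[OF R] subring_1[OF R] by blast+
  fix x assume "x \<in> ?F"
  then obtain n r where x: "x = inverse (a ^ n) * r" "r \<in> R" by blast
  have "- x = inverse (a ^ n) * (- r)" using x by simp
  then show "- x \<in> ?F" using subring_uminus[OF R x(2)] by blast
  fix y assume "y \<in> ?F"
  then obtain m s where y: "y = inverse (a ^ m) * s" "s \<in> R" by blast
  have "inverse (a ^ (n + m)) * (a ^ m * r) = inverse (a ^ n) * (inverse (a ^ m) * (a ^ m * r))"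
    by (simp add: inverse_power_add mult.assoc)
  moreover have "inverse (a ^ (n + m)) * (a ^ n * s) = inverse (a ^ m) * (inverse (a ^ n) * (a ^ n * s))"
    by (simp add: inverse_power_add[of a m n, unfolded add.commute[of m]] mult.assoc)
  ultimately have "x + y = inverse (a ^ (n + m)) * (a ^ m * r + a ^ n * s)"
    using x y a(2) by (simp add: distrib_left)
  moreover have "a ^ m * r + a ^ n * s \<in> R"
    using x y subring_power[OF R a(1)] by (simp add: subring_add[OF R] subring_mult[OF R])
  ultimately show "x + y \<in> ?F" by blast
  obtain t where t: "t \<in> R" "a ^ m * r = t * a ^ m"
    using normalizer_commute_left[OF normalizer_power[OF a(3)] x(2)] by blast
  have "x * y = inverse (a ^ n) * (r * inverse (a ^ m)) * s" using x y by (simp add: mult.assoc)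
  also have "\<dots> = inverse (a ^ (n + m)) * (t * s)"
    using intertwines_inverse[OF t(2)] by (simp add: inverse_power_add mult.assoc)
  finally have "x * y = inverse (a ^ (n + m)) * (t * s)" .
  then show "x * y \<in> ?F" using subring_mult[OF R t(1) y(2)] by blast
qed

lemma right_fractions_eq_left_fractions:
  fixes a :: "'a::division_ring"
  assumes a: "a \<in> normalizer R"
  shows "{r * inverse (a ^ n) | n r. r \<in> R} = {inverse (a ^ n) * r | n r. r \<in> R}"
proof (intro equalityI subsetI)
  fix x assume "x \<in> {r * inverse (a ^ n) | n r. r \<in> R}"
  then obtain n r where x: "x = r * inverse (a ^ n)" "r \<in> R" by blast
  obtain t where "t \<in> R" "a ^ n * r = t * a ^ n"
    using normalizer_commute_left[OF normalizer_power[OF a] x(2)] by blast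
  then show "x \<in> {inverse (a ^ n) * r | n r. r \<in> R}" using x intertwines_inverse by blast
next
  fix x assume "x \<in> {inverse (a ^ n) * r | n r. r \<in> R}"
  then obtain n r where x: "x = inverse (a ^ n) * r" "r \<in> R" by blast
  obtain t where "t \<in> R" "r * a ^ n = a ^ n * t"
    using normalizer_commute_right[OF normalizer_power[OF a] x(2)] by blast
  then have "x = t * inverse (a ^ n)" using x intertwines_inverse[of "a ^ n" t r] by simp
  then show "x \<in> {r * inverse (a ^ n) | n r. r \<in> R}" using \<open>t \<in> R\<close> by blast
qed

lemma
  fixes a :: "'a::division_ring"
  assumes R: "subring R" and a: "a \<in> R" "a \<noteq> 0" "a \<in> normalizer R"
  shows left_ore_set_normal_powers: "left_ore_set R (range (\<lambda>n. a ^ n))"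
    and right_ore_set_normal_powers: "right_ore_set R (range (\<lambda>n. a ^ n))"
proof -
  let ?X = "range (\<lambda>n. a ^ n)"
  have X: "?X \<subseteq> R" "1 \<in> ?X" "\<forall>s\<in>?X. \<forall>t\<in>?X. s * t \<in> ?X"
    using subring_power[OF R a(1)] by (auto intro: range_eqI[of _ _ 0] simp flip: power_add)
  have "\<forall>r\<in>R. \<forall>s\<in>?X. \<exists>s'\<in>?X. \<exists>r'\<in>R. s' * r = r' * s"
    using normalizer_commute_left[OF normalizer_power[OF a(3)]] by blast
  moreover have "\<forall>r\<in>R. \<forall>s\<in>?X. r * s = 0 \<longrightarrow> (\<exists>s'\<in>?X. s' * r = 0)"
    using a(2) X(2) by auto
  ultimately show "left_ore_set R ?X" using X unfolding left_ore_set_def by blast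
  have "\<forall>r\<in>R. \<forall>s\<in>?X. \<exists>s'\<in>?X. \<exists>r'\<in>R. r * s' = s * r'"
    using normalizer_commute_right[OF normalizer_power[OF a(3)]] by blast
  moreover have "\<forall>r\<in>R. \<forall>s\<in>?X. s * r = 0 \<longrightarrow> (\<exists>s'\<in>?X. r * s' = 0)"
    using a(2) X(2) by auto
  ultimately show "right_ore_set R ?X" using X unfolding right_ore_set_def by blast
qed

section \<open>Ideals, uniform dimension and the Jacobson radical\<close>

lemma left_ideal_eq_if_one_mem:
  assumes "left_ideal R M" "1 \<in> M"
  shows "M = R"
proof
  show "M \<subseteq> R" using assms(1) unfolding left_ideal_def by blast
  have "r * 1 \<in> M" if "r \<in> R" for r using assms that unfolding left_ideal_def by blast
  then show "R \<subseteq> M" by auto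
qed

lemma Sup_direct_families_eq_1:
  fixes P :: "'a::ab_group_add set \<Rightarrow> bool"
  assumes PR: "P R" "R \<noteq> {0}"
    and zero: "\<And>I. P I \<Longrightarrow> 0 \<in> I" and uminus: "\<And>I x. P I \<Longrightarrow> x \<in> I \<Longrightarrow> - x \<in> I"
    and meet: "\<And>I J. P I \<Longrightarrow> P J \<Longrightarrow> I \<noteq> {0} \<Longrightarrow> J \<noteq> {0} \<Longrightarrow> \<exists>x\<in>I \<inter> J. x \<noteq> 0"
  shows "Sup {enat n | n. \<exists>I :: nat \<Rightarrow> 'a set. (\<forall>i<n. P (I i) \<and> I i \<noteq> {0}) \<and>
      (\<forall>x. (\<forall>i<n. x i \<in> I i) \<and> (\<Sum>i<n. x i) = 0 \<longrightarrow> (\<forall>i<n. x i = 0))} = 1"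
    (is "Sup {enat n | n. ?direct n} = 1")
proof (rule antisym)
  have le: "n \<le> 1" if "?direct n" for n
  proof (rule ccontr)
    assume "\<not> n \<le> 1"
    then have n: "0 < n" "1 < n" by auto
    obtain I :: "nat \<Rightarrow> 'a set" where I: "\<forall>i<n. P (I i) \<and> I i \<noteq> {0}"
      and direct: "\<forall>x. (\<forall>i<n. x i \<in> I i) \<and> (\<Sum>i<n. x i) = 0 \<longrightarrow> (\<forall>i<n. x i = 0)"
      using \<open>?direct n\<close> by (elim exE conjE)
    have "P (I 0)" "I 0 \<noteq> {0}" "P (I 1)" "I 1 \<noteq> {0}" using I n by simp_all
    then obtain c where c: "c \<in> I 0" "c \<in> I 1" "c \<noteq> 0" using meet by blast
    define x where "x i = (if i = 0 then c else if i = 1 then - c else 0)" for i :: nat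
    have "x i \<in> I i" if "i < n" for i
      using I that c zero uminus[OF \<open>P (I 1)\<close> c(2)] unfolding x_def by simp
    moreover have "(\<Sum>i<n. x i) = (\<Sum>i\<in>{0, 1}. x i)"
      using n by (intro sum.mono_neutral_right) (auto simp: x_def)
    then have "(\<Sum>i<n. x i) = 0" by (simp add: x_def)
    ultimately have "x 0 = 0" using direct n by blast
    then show False using c(3) by (simp add: x_def)
  qed
  show "Sup {enat n | n. ?direct n} \<le> 1"
  proof (rule Sup_least)
    fix y assume "y \<in> {enat n | n. ?direct n}"
    then obtain n where "y = enat n" "?direct n" by blast
    then show "y \<le> 1" using le by (simp add: one_enat_def)
  qed
  have "?direct 1" using PR by (intro exI[of _ "\<lambda>_. R"]) auto
  then have "enat 1 \<in> {enat n | n. ?direct n}" by blast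
  then show "1 \<le> Sup {enat n | n. ?direct n}"
    by (simp add: Sup_upper one_enat_def)
qed

definition left_quasi_regular :: "'a::division_ring set \<Rightarrow> 'a set \<Rightarrow> bool" where
  "left_quasi_regular R I \<longleftrightarrow> (\<forall>m\<in>I. \<exists>v\<in>R. v * (1 - m) = 1)"

lemma one_notin_left_quasi_regular: "left_quasi_regular R I \<Longrightarrow> 1 \<notin> I"
  unfolding left_quasi_regular_def by fastforce

lemma left_ideal_sum_principal:
  assumes R: "subring R" and M: "left_ideal R M" and a: "a \<in> R"
  shows "left_ideal R {m + r * a | m r. m \<in> M \<and> r \<in> R}" (is "left_ideal R ?K")
proof -
  have MR: "M \<subseteq> R" and M0: "0 \<in> M" and Madd: "\<forall>x\<in>M. \<forall>y\<in>M. x + y \<in> M"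
    and Mneg: "\<forall>x\<in>M. - x \<in> M" and Mmul: "\<forall>t\<in>R. \<forall>x\<in>M. t * x \<in> M"
    using M unfolding left_ideal_def by blast+
  have "?K \<subseteq> R" using MR a subring_add[OF R] subring_mult[OF R] by blast
  moreover have "0 \<in> ?K"
  proof -
    have "0 = 0 + 0 * a" by simp
    then show ?thesis using M0 subring_0[OF R] by blast
  qed
  moreover have "\<forall>x\<in>?K. \<forall>y\<in>?K. x + y \<in> ?K"
  proof (intro ballI)
    fix x y assume "x \<in> ?K" "y \<in> ?K"
    then obtain m r m' r' where "x = m + r * a" "y = m' + r' * a" "m \<in> M" "r \<in> R" "m' \<in> M" "r' \<in> R"
      by blast
    moreover have "x + y = (m + m') + (r + r') * a" using calculation by (simp add: algebra_simps)
    ultimately show "x + y \<in> ?K" using Madd subring_add[OF R] by blast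
  qed
  moreover have "\<forall>x\<in>?K. - x \<in> ?K"
  proof
    fix x assume "x \<in> ?K"
    then obtain m r where "x = m + r * a" "m \<in> M" "r \<in> R" by blast
    moreover have "- x = (- m) + (- r) * a" using calculation by simp
    ultimately show "- x \<in> ?K" using Mneg subring_uminus[OF R] by blast
  qed
  moreover have "\<forall>t\<in>R. \<forall>x\<in>?K. t * x \<in> ?K"
  proof (intro ballI)
    fix t x assume "t \<in> R" "x \<in> ?K"
    then obtain m r where "x = m + r * a" "m \<in> M" "r \<in> R" by blast
    moreover have "t * x = t * m + (t * r) * a" using calculation by (simp add: algebra_simps)
    ultimately show "t * x \<in> ?K" using Mmul \<open>t \<in> R\<close> subring_mult[OF R] by blast
  qed
  ultimately show ?thesis unfolding left_ideal_def by blast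
qed

lemma mem_jacobson_if_left_quasi_regular:
  assumes R: "subring R" and a: "a \<in> R" and qr: "left_quasi_regular R {r * a | r. r \<in> R}"
  shows "a \<in> jacobson R"
  unfolding jacobson_def
proof (intro IntI InterI a)
  fix M assume "M \<in> {M. maximal_left_ideal R M}"
  then have M: "left_ideal R M" "M \<noteq> R" "\<And>I. left_ideal R I \<Longrightarrow> M \<subseteq> I \<Longrightarrow> I \<noteq> R \<Longrightarrow> I = M"
    unfolding maximal_left_ideal_def by blast+
  show "a \<in> M"
  proof (rule ccontr)
    assume "a \<notin> M"
    let ?K = "{m + r * a | m r. m \<in> M \<and> r \<in> R}"
    have "M \<subseteq> ?K"
    proof
      fix m assume "m \<in> M"
      moreover have "m = m + 0 * a" by simp
      ultimately show "m \<in> ?K" using subring_0[OF R] by blast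
    qed
    moreover have "a \<in> ?K"
    proof -
      have "a = 0 + 1 * a" by simp
      then show ?thesis using M(1) subring_1[OF R] unfolding left_ideal_def by blast
    qed
    ultimately have "?K = R" using M(3)[OF left_ideal_sum_principal[OF R M(1) a]] \<open>a \<notin> M\<close> by blast
    then obtain m r where "m \<in> M" "r \<in> R" "1 = m + r * a" using subring_1[OF R] by blast
    then have "m \<in> M" "m = 1 - r * a" "r \<in> R" by (simp_all add: algebra_simps)
    then obtain v where "v \<in> R" "v * m = 1" using qr unfolding left_quasi_regular_def by blast
    then have "1 \<in> M" using M(1) \<open>m \<in> M\<close> unfolding left_ideal_def by metis
    then show False using left_ideal_eq_if_one_mem M(1,2) by blast
  qed
qed

lemma prime_ideal_mem_if_normal_power_mem:
  assumes R: "subring R" and a: "a \<in> R" "a \<in> normalizer R"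
    and P: "prime_ideal R P" and "a ^ n \<in> P"
  shows "a \<in> P"
proof -
  have PL: "left_ideal R P" and "P \<noteq> R" using P unfolding prime_ideal_def two_sided_ideal_def by blast+
  have Pmul: "\<And>t x. t \<in> R \<Longrightarrow> x \<in> P \<Longrightarrow> t * x \<in> P" using PL unfolding left_ideal_def by blast
  have Pprime: "\<And>A B. two_sided_ideal R A \<Longrightarrow> two_sided_ideal R B \<Longrightarrow>
      (\<forall>x\<in>A. \<forall>y\<in>B. x * y \<in> P) \<Longrightarrow> A \<subseteq> P \<or> B \<subseteq> P"
    using P unfolding prime_ideal_def by blast
  show ?thesis using \<open>a ^ n \<in> P\<close>
  proof (induction n)
    case 0
    then show ?case using left_ideal_eq_if_one_mem[OF PL] \<open>P \<noteq> R\<close> by simp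
  next
    case (Suc n)
    let ?A = "{r * a | r. r \<in> R}" and ?B = "{r * a ^ n | r. r \<in> R}"
    have ideals: "two_sided_ideal R ?A" "two_sided_ideal R ?B"
      using two_sided_ideal_normal_principal[OF R a]
        two_sided_ideal_normal_principal[OF R subring_power[OF R a(1)] normalizer_power[OF a(2)]] .
    have "x * y \<in> P" if xy: "x \<in> ?A" "y \<in> ?B" for x y
    proof -
      obtain r s where rs: "r \<in> R" "s \<in> R" "x = r * a" "y = s * a ^ n" using xy by blast
      obtain u where u: "u \<in> R" "a * s = u * a" using normalizer_commute_left[OF a(2) rs(2)] by blast
      have "x * y = r * (a * s) * a ^ n" using rs by (simp add: mult.assoc)
      also have "\<dots> = (r * u) * a ^ Suc n" using u by (simp add: mult.assoc)
      finally show ?thesis using Pmul[OF subring_mult[OF R rs(1) u(1)] Suc.prems] by simp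
    qed
    then have "?A \<subseteq> P \<or> ?B \<subseteq> P" using Pprime[OF ideals] by blast
    moreover have "a \<in> ?A" "a ^ n \<in> ?B" by (auto intro!: exI[of _ 1] simp: subring_1[OF R])
    ultimately show ?case using Suc.IH by blast
  qed
qed

section \<open>Polynomial expressions with left coefficients\<close>

definition left_polys :: "'a::semiring_1 set \<Rightarrow> 'a \<Rightarrow> nat \<Rightarrow> 'a set" where
  "left_polys C y n = {\<Sum>i\<le>n. c i * y ^ i | c. \<forall>i\<le>n. c i \<in> C}"

lemma left_polysI: "(\<And>i. i \<le> n \<Longrightarrow> c i \<in> C) \<Longrightarrow> (\<Sum>i\<le>n. c i * y ^ i) \<in> left_polys C y n"
  unfolding left_polys_def by blast

lemma left_polysE:
  assumes "p \<in> left_polys C y n"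
  obtains c where "p = (\<Sum>i\<le>n. c i * y ^ i)" "\<And>i. i \<le> n \<Longrightarrow> c i \<in> C"
  using assms unfolding left_polys_def by blast

lemma left_polys_0: "left_polys C y 0 = C"
  unfolding left_polys_def by force

context
  fixes C :: "'a::semiring_1 set"
  assumes zero: "0 \<in> C" and add: "\<And>x y. x \<in> C \<Longrightarrow> y \<in> C \<Longrightarrow> x + y \<in> C"
begin

lemma monomial_in_left_polys:
  assumes "c \<in> C" "i \<le> n"
  shows "c * y ^ i \<in> left_polys C y n"
proof -
  have "(\<Sum>j\<le>n. (if j = i then c else 0) * y ^ j) = c * y ^ i"
    using assms(2) by (simp add: if_distrib[of "\<lambda>x. x * _"] cong: if_cong)
  then show ?thesis using left_polysI[of n "\<lambda>j. if j = i then c else 0" C y] zero assms(1) by simp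
qed

lemma left_polys_add:
  assumes "p \<in> left_polys C y n" "q \<in> left_polys C y n"
  shows "p + q \<in> left_polys C y n"
proof -
  obtain c d where "p = (\<Sum>i\<le>n. c i * y ^ i)" "\<And>i. i \<le> n \<Longrightarrow> c i \<in> C"
    and "q = (\<Sum>i\<le>n. d i * y ^ i)" "\<And>i. i \<le> n \<Longrightarrow> d i \<in> C"
    using assms by (auto elim!: left_polysE)
  then show ?thesis
    using left_polysI[of n "\<lambda>i. c i + d i" C y] add by (simp add: sum.distrib distrib_right)
qed

lemma left_polys_sum:
  "finite S \<Longrightarrow> (\<And>s. s \<in> S \<Longrightarrow> f s \<in> left_polys C y n) \<Longrightarrow> sum f S \<in> left_polys C y n"
proof (induction S rule: finite_induct)
  case empty
  then show ?case using monomial_in_left_polys[OF zero, of 0 n y] by simp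
next
  case (insert x F)
  then show ?case using left_polys_add by simp
qed

lemma left_polys_mono:
  assumes "p \<in> left_polys C y n" "n \<le> m"
  shows "p \<in> left_polys C y m"
proof -
  obtain c where "p = (\<Sum>i\<le>n. c i * y ^ i)" "\<And>i. i \<le> n \<Longrightarrow> c i \<in> C"
    using assms(1) by (auto elim!: left_polysE)
  then show ?thesis
    using assms(2) by (auto intro!: left_polys_sum monomial_in_left_polys)
qed

end

context
  fixes R I :: "'a::division_ring set"
  assumes R: "subring R" and I: "left_ideal R I" and qr: "left_quasi_regular R I"
begin

(* The top term of the first expansion is rewritten using 1 - d 0 = (the rest of the second
   expansion), which moves it into lower degrees. *)
lemma left_polys_one_degree_reduce:
  assumes y: "y \<noteq> 0" and "k \<le> n"
    and top: "1 \<in> left_polys I y (Suc n)" and bottom: "1 \<in> left_polys I (inverse y) (Suc k)"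
  shows "1 \<in> left_polys I y n"
proof -
  have I0: "0 \<in> I" and Iadd: "\<And>x z. x \<in> I \<Longrightarrow> z \<in> I \<Longrightarrow> x + z \<in> I"
    and Imul: "\<And>t x. t \<in> R \<Longrightarrow> x \<in> I \<Longrightarrow> t * x \<in> I" and IR: "I \<subseteq> R"
    using I unfolding left_ideal_def by blast+
  obtain c where c: "1 = (\<Sum>i\<le>Suc n. c i * y ^ i)" "\<And>i. i \<le> Suc n \<Longrightarrow> c i \<in> I"
    using top by (auto elim!: left_polysE)
  obtain d where d: "1 = (\<Sum>j\<le>Suc k. d j * inverse y ^ j)" "\<And>j. j \<le> Suc k \<Longrightarrow> d j \<in> I"
    using bottom by (auto elim!: left_polysE)
  have "1 = d 0 + (\<Sum>j\<le>k. d (Suc j) * inverse y ^ Suc j)"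
    using d(1) by (simp only: sum.atMost_Suc_shift power_0 mult_1_right)
  then have d_tail: "1 - d 0 = (\<Sum>j\<le>k. d (Suc j) * inverse y ^ Suc j)" by (simp add: algebra_simps)
  obtain v where v: "v \<in> R" "v * (1 - d 0) = 1" using qr d(2) unfolding left_quasi_regular_def by blast
  have shift: "inverse y ^ Suc j * y ^ Suc n = y ^ (n - j)" if "j \<le> k" for j
  proof -
    have "Suc n = Suc j + (n - j)" using that \<open>k \<le> n\<close> by simp
    then have "y ^ Suc n = y ^ Suc j * y ^ (n - j)" by (metis power_add)
    then show ?thesis using y by (simp add: power_inverse mult.assoc del: power_Suc)
  qed
  have "c (Suc n) * y ^ Suc n = c (Suc n) * v * (1 - d 0) * y ^ Suc n" using v by (simp add: mult.assoc)
  also have "\<dots> = (\<Sum>j\<le>k. (c (Suc n) * v * d (Suc j)) * (inverse y ^ Suc j * y ^ Suc n))"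
    unfolding d_tail by (simp add: sum_distrib_left sum_distrib_right mult.assoc)
  also have "\<dots> = (\<Sum>j\<le>k. (c (Suc n) * v * d (Suc j)) * y ^ (n - j))"
    using shift by (simp del: power_Suc)
  finally have top_term: "c (Suc n) * y ^ Suc n = (\<Sum>j\<le>k. (c (Suc n) * v * d (Suc j)) * y ^ (n - j))" .
  have "c (Suc n) * v * d (Suc j) \<in> I" if "j \<le> k" for j
    using c(2)[of "Suc n"] d(2)[of "Suc j"] v(1) IR that subring_mult[OF R] Imul by auto
  then have "c (Suc n) * y ^ Suc n \<in> left_polys I y n"
    unfolding top_term by (auto intro!: left_polys_sum monomial_in_left_polys I0 Iadd)
  moreover have "(\<Sum>i\<le>n. c i * y ^ i) \<in> left_polys I y n" using c(2) by (intro left_polysI) simp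
  moreover have "1 = (\<Sum>i\<le>n. c i * y ^ i) + c (Suc n) * y ^ Suc n" using c(1) by simp
  ultimately show ?thesis using left_polys_add[OF I0 Iadd] by metis
qed

lemma one_notin_left_polys_and_inverse:
  assumes "y \<noteq> 0" "1 \<in> left_polys I y n" "1 \<in> left_polys I (inverse y) k"
  shows False
  using assms
proof (induction "n + k" arbitrary: y n k rule: less_induct)
  case less
  show False
  proof (cases "n = 0 \<or> k = 0")
    case True
    then show False using less.prems one_notin_left_quasi_regular[OF qr] by (auto simp: left_polys_0)
  next
    case False
    then obtain n' k' where nk: "n = Suc n'" "k = Suc k'" by (metis not0_implies_Suc)
    show False
    proof (cases "k' \<le> n'")
      case True
      then have "1 \<in> left_polys I y n'" using left_polys_one_degree_reduce less.prems nk by blast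
      then show False using less.hyps[of n' k y] less.prems nk by simp
    next
      case False
      then have "1 \<in> left_polys I (inverse y) k'"
        using left_polys_one_degree_reduce[of "inverse y" n' k'] less.prems nk by simp
      then show False using less.hyps[of n k' y] less.prems nk by simp
    qed
  qed
qed

end

lemma subring_left_polys:
  assumes R: "subring R" and l: "l \<in> normalizer R"
  shows "subring (\<Union>n. left_polys R l n)" (is "subring ?B")
proof -
  note zero = subring_0[OF R] and add = subring_add[OF R]
  have const: "r \<in> ?B" if "r \<in> R" for r
    using monomial_in_left_polys[OF zero add that, of 0 0 l] by auto
  have uminus: "\<forall>p\<in>?B. - p \<in> ?B"
  proof
    fix p assume "p \<in> ?B"
    then obtain n c where "p = (\<Sum>i\<le>n. c i * l ^ i)" "\<And>i. i \<le> n \<Longrightarrow> c i \<in> R"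
      by (auto elim!: left_polysE)
    then have "- p \<in> left_polys R l n"
      using left_polysI[of n "\<lambda>i. - c i" R l] subring_uminus[OF R] by (simp add: sum_negf)
    then show "- p \<in> ?B" by blast
  qed
  have add_mult: "p + q \<in> ?B \<and> p * q \<in> ?B" if pqB: "p \<in> ?B" "q \<in> ?B" for p q
  proof -
    obtain n m where pq: "p \<in> left_polys R l n" "q \<in> left_polys R l m" using pqB by blast
    have "p \<in> left_polys R l (n + m)" "q \<in> left_polys R l (n + m)"
      using left_polys_mono[OF zero add pq(1)] left_polys_mono[OF zero add pq(2)] by simp_all
    then have "p + q \<in> left_polys R l (n + m)" using left_polys_add[OF zero add] by blast
    moreover have "p * q \<in> left_polys R l (n + m)"
    proof -
      obtain c where c: "p = (\<Sum>i\<le>n. c i * l ^ i)" "\<And>i. i \<le> n \<Longrightarrow> c i \<in> R"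
        using pq(1) by (auto elim!: left_polysE)
      obtain d where d: "q = (\<Sum>j\<le>m. d j * l ^ j)" "\<And>j. j \<le> m \<Longrightarrow> d j \<in> R"
        using pq(2) by (auto elim!: left_polysE)
      have product_term: "(c i * l ^ i) * (d j * l ^ j) \<in> left_polys R l (n + m)"
        if ij: "i \<le> n" "j \<le> m" for i j
      proof -
        obtain e where e: "e \<in> R" "l ^ i * d j = e * l ^ i"
          using normalizer_commute_left[OF normalizer_power[OF l] d(2)[OF ij(2)]] by blast
        have "(c i * l ^ i) * (d j * l ^ j) = c i * (l ^ i * d j) * l ^ j" by (simp add: mult.assoc)
        also have "\<dots> = (c i * e) * l ^ (i + j)" by (simp add: e(2) mult.assoc power_add)
        finally show ?thesis
          using monomial_in_left_polys[OF zero add] subring_mult[OF R c(2)[OF ij(1)] e(1)] ij by simp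
      qed
      have "p * q = (\<Sum>i\<le>n. \<Sum>j\<le>m. (c i * l ^ i) * (d j * l ^ j))"
        using c(1) d(1) by (simp add: sum_product)
      also have "\<dots> \<in> left_polys R l (n + m)"
        using product_term by (auto intro!: left_polys_sum[OF zero add])
      finally show ?thesis .
    qed
    ultimately show ?thesis by blast
  qed
  show ?thesis
    unfolding subring_def using const[OF zero] const[OF subring_1[OF R]] uminus add_mult by blast
qed

section \<open>Maximal subrings with a normal non-unit\<close>

locale maximal_subring_normal_nonunit =
  fixes R :: "'a::division_ring set" and a :: 'a
  assumes maximal: "maximal_subring R"
    and a_mem: "a \<in> R" and a_nonzero: "a \<noteq> 0" and inverse_a_notin: "inverse a \<notin> R"
    and a_normal: "a \<in> normalizer R"
begin

lemma R_subring: "subring R"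
  using maximal unfolding maximal_subring_def by blast

lemma a_power_mem: "a ^ n \<in> R"
  using subring_power[OF R_subring a_mem] .

lemma subring_psuperset_eq_UNIV: "subring S \<Longrightarrow> R \<subseteq> S \<Longrightarrow> S \<noteq> R \<Longrightarrow> S = UNIV"
  using maximal unfolding maximal_subring_def by blast

lemma mult_a_neq_1: "r \<in> R \<Longrightarrow> r * a \<noteq> 1"
  using inverse_a_notin inverse_unique[of r a] by force

lemma ore_sets_powers:
  "left_ore_set R (range (\<lambda>n. a ^ n))" "right_ore_set R (range (\<lambda>n. a ^ n))"
  using left_ore_set_normal_powers[OF R_subring a_mem a_nonzero a_normal]
    right_ore_set_normal_powers[OF R_subring a_mem a_nonzero a_normal] .

lemma left_fractions_eq_UNIV: "{inverse (a ^ n) * r | n r. r \<in> R} = UNIV"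
proof (rule subring_psuperset_eq_UNIV)
  show "subring {inverse (a ^ n) * r | n r. r \<in> R}"
    using subring_left_fractions[OF R_subring a_mem a_nonzero a_normal] .
  show "R \<subseteq> {inverse (a ^ n) * r | n r. r \<in> R}"
    by (auto intro!: exI[of _ "0::nat"])
  have "inverse a \<in> {inverse (a ^ n) * r | n r. r \<in> R}"
    using subring_1[OF R_subring] by (auto intro!: exI[of _ "1::nat"])
  then show "{inverse (a ^ n) * r | n r. r \<in> R} \<noteq> R" using inverse_a_notin by blast
qed

lemma right_fractions_eq_UNIV: "{r * inverse (a ^ n) | n r. r \<in> R} = UNIV"
  using left_fractions_eq_UNIV right_fractions_eq_left_fractions[OF a_normal] by simp

lemma left_multiple_eq_power:
  assumes "x \<noteq> 0"
  obtains n r where "r \<in> R" "r * x = a ^ n"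
proof -
  obtain n r where "inverse x = inverse (a ^ n) * r" "r \<in> R"
    using left_fractions_eq_UNIV by blast
  then have "r = a ^ n * inverse x" using a_nonzero by (simp add: mult.assoc[symmetric])
  then have "r * x = a ^ n" using assms by (simp add: mult.assoc)
  with \<open>r \<in> R\<close> show thesis by (rule that)
qed

lemma right_multiple_eq_power:
  assumes "x \<noteq> 0"
  obtains n r where "r \<in> R" "x * r = a ^ n"
proof -
  obtain n r where "inverse x = r * inverse (a ^ n)" "r \<in> R"
    using right_fractions_eq_UNIV by blast
  then have "r = inverse x * a ^ n" using a_nonzero by (simp add: mult.assoc)
  then have "x * r = a ^ n" using assms by (simp add: mult.assoc[symmetric])
  with \<open>r \<in> R\<close> show thesis by (rule that)
qed

lemma left_ideal_contains_powers:
  assumes I: "left_ideal R I" "I \<noteq> {0}"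
  shows "\<exists>n. \<forall>m\<ge>n. a ^ m \<in> I"
proof -
  obtain x where x: "x \<in> I" "x \<noteq> 0" using I unfolding left_ideal_def by blast
  obtain n r where r: "r \<in> R" "r * x = a ^ n" using left_multiple_eq_power[OF x(2)] by blast
  have "a ^ m \<in> I" if "n \<le> m" for m
  proof -
    have "a ^ m = (a ^ (m - n) * r) * x" using r that by (simp add: mult.assoc flip: power_add)
    then show ?thesis
      using I(1) x(1) subring_mult[OF R_subring a_power_mem r(1)] unfolding left_ideal_def by simp
  qed
  then show ?thesis by blast
qed

lemma right_ideal_contains_powers:
  assumes I: "right_ideal R I" "I \<noteq> {0}"
  shows "\<exists>n. \<forall>m\<ge>n. a ^ m \<in> I"
proof -
  obtain x where x: "x \<in> I" "x \<noteq> 0" using I unfolding right_ideal_def by blast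
  obtain n r where r: "r \<in> R" "x * r = a ^ n" using right_multiple_eq_power[OF x(2)] by blast
  have "a ^ m \<in> I" if "n \<le> m" for m
  proof -
    have "a ^ m = x * (r * a ^ (m - n))" using r that by (simp add: mult.assoc[symmetric] flip: power_add)
    then show ?thesis
      using I(1) x(1) subring_mult[OF R_subring r(1) a_power_mem] unfolding right_ideal_def by simp
  qed
  then show ?thesis by blast
qed

lemma R_nonzero: "R \<noteq> {0}"
  using subring_1[OF R_subring] by auto

lemma udim_left_eq_1: "udim_left R = 1"
  unfolding udim_left_def
proof (rule Sup_direct_families_eq_1)
  show "left_ideal R R"
    using R_subring unfolding left_ideal_def subring_def by blast
  show "\<exists>x\<in>I \<inter> J. x \<noteq> 0" if IJ: "left_ideal R I" "left_ideal R J" "I \<noteq> {0}" "J \<noteq> {0}" for I J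
  proof -
    obtain n where "\<And>k. n \<le> k \<Longrightarrow> a ^ k \<in> I" using left_ideal_contains_powers[OF IJ(1,3)] by blast
    moreover obtain m where "\<And>k. m \<le> k \<Longrightarrow> a ^ k \<in> J" using left_ideal_contains_powers[OF IJ(2,4)] by blast
    ultimately show ?thesis using a_nonzero by (intro bexI[of _ "a ^ (n + m)"]) auto
  qed
qed (auto simp: R_nonzero left_ideal_def)

lemma udim_right_eq_1: "udim_right R = 1"
  unfolding udim_right_def
proof (rule Sup_direct_families_eq_1)
  show "right_ideal R R"
    using R_subring unfolding right_ideal_def subring_def by blast
  show "\<exists>x\<in>I \<inter> J. x \<noteq> 0" if IJ: "right_ideal R I" "right_ideal R J" "I \<noteq> {0}" "J \<noteq> {0}" for I J
  proof -
    obtain n where "\<And>k. n \<le> k \<Longrightarrow> a ^ k \<in> I" using right_ideal_contains_powers[OF IJ(1,3)] by blast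
    moreover obtain m where "\<And>k. m \<le> k \<Longrightarrow> a ^ k \<in> J" using right_ideal_contains_powers[OF IJ(2,4)] by blast
    ultimately show ?thesis using a_nonzero by (intro bexI[of _ "a ^ (n + m)"]) auto
  qed
qed (auto simp: R_nonzero right_ideal_def)

lemma ore_domain: "ore_domain_with_quotients_D R"
  unfolding ore_domain_with_quotients_D_def
proof (intro conjI ballI allI impI)
  fix x y assume "x \<in> R" "y \<in> R" "x \<noteq> 0 \<and> y \<noteq> 0"
  then have "x \<noteq> 0" "y \<noteq> 0" by simp_all
  show "\<exists>u\<in>R. \<exists>v\<in>R. u * x = v * y \<and> u * x \<noteq> 0"
  proof -
    obtain n r where r: "r \<in> R" "r * x = a ^ n" using left_multiple_eq_power[OF \<open>x \<noteq> 0\<close>] .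
    obtain m s where s: "s \<in> R" "s * y = a ^ m" using left_multiple_eq_power[OF \<open>y \<noteq> 0\<close>] .
    have "(a ^ m * r) * x = (a ^ n * s) * y"
      using r s by (simp add: mult.assoc add.commute flip: power_add)
    moreover have "(a ^ m * r) * x \<noteq> 0" using r a_nonzero by (simp add: mult.assoc)
    ultimately show ?thesis using r s a_power_mem subring_mult[OF R_subring] by blast
  qed
  show "\<exists>u\<in>R. \<exists>v\<in>R. x * u = y * v \<and> x * u \<noteq> 0"
  proof -
    obtain n r where r: "r \<in> R" "x * r = a ^ n" using right_multiple_eq_power[OF \<open>x \<noteq> 0\<close>] .
    obtain m s where s: "s \<in> R" "y * s = a ^ m" using right_multiple_eq_power[OF \<open>y \<noteq> 0\<close>] .
    have "x * (r * a ^ m) = y * (s * a ^ n)"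
      using r s by (simp add: add.commute flip: mult.assoc power_add)
    moreover have "x * (r * a ^ m) \<noteq> 0" using r a_nonzero by (simp flip: mult.assoc)
    ultimately show ?thesis using r s a_power_mem subring_mult[OF R_subring] by blast
  qed
next
  fix d :: 'a
  obtain n r where "d = inverse (a ^ n) * r" "r \<in> R" using left_fractions_eq_UNIV by blast
  moreover have "a ^ n \<noteq> 0" using a_nonzero by simp
  ultimately show "\<exists>s\<in>R. \<exists>r\<in>R. s \<noteq> 0 \<and> d = inverse s * r" using a_power_mem by blast
next
  fix d :: 'a
  obtain n r where "d = r * inverse (a ^ n)" "r \<in> R" using right_fractions_eq_UNIV by blast
  moreover have "a ^ n \<noteq> 0" using a_nonzero by simp
  ultimately show "\<exists>s\<in>R. \<exists>r\<in>R. s \<noteq> 0 \<and> d = r * inverse s" using a_power_mem by blast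
qed (simp_all add: R_nonzero)

lemma nonzero_prime_ideal_contains_a:
  assumes "prime_ideal R P" "P \<noteq> {0}"
  shows "a \<in> P"
proof -
  have "left_ideal R P" using assms(1) unfolding prime_ideal_def two_sided_ideal_def by blast
  then obtain n where "a ^ n \<in> P" using left_ideal_contains_powers assms(2) by blast
  then show ?thesis
    using prime_ideal_mem_if_normal_power_mem[OF R_subring a_mem a_normal assms(1)] by blast
qed

lemma principal_ideal_a: "two_sided_ideal R {r * a | r. r \<in> R}"
  using two_sided_ideal_normal_principal[OF R_subring a_mem a_normal] .

lemma inverse_one_minus_mult_a_mem:
  assumes r: "r \<in> R"
  shows "inverse (1 - r * a) \<in> R"
proof -
  define u where "u = 1 - r * a"
  have u: "u \<noteq> 0" using mult_a_neq_1[OF r] unfolding u_def by simp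
  (* s u = a^(n+1) forces s = (a^n + s r) a, so one factor of a cancels. *)
  have "inverse u \<in> R" if "s \<in> R" "inverse u = inverse (a ^ n) * s" for n s
    using that
  proof (induction n arbitrary: s)
    case 0
    then show ?case by simp
  next
    case (Suc n)
    have "s = a ^ Suc n * inverse u"
      using Suc.prems(2) a_nonzero by (simp add: mult.assoc[symmetric] del: power_Suc)
    then have "s * u = a ^ Suc n" using u by (simp add: mult.assoc del: power_Suc)
    then have "s * u = a ^ n * a" by (simp only: power_Suc2)
    moreover have "s = s * u + s * r * a" by (simp add: u_def algebra_simps)
    ultimately have "s = (a ^ n + s * r) * a" by (simp add: distrib_right)
    moreover obtain t where t: "t \<in> R" "(a ^ n + s * r) * a = a * t"
      using normalizer_commute_right[OF a_normal] a_power_mem subring_add[OF R_subring]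
        subring_mult[OF R_subring Suc.prems(1) r] by blast
    ultimately have "inverse u = inverse (a ^ n) * inverse a * (a * t)"
      using Suc.prems(2) inverse_power_add[of a n 1] by simp
    also have "\<dots> = inverse (a ^ n) * t" using a_nonzero by (simp add: mult.assoc)
    finally have "inverse u = inverse (a ^ n) * t" .
    then show ?case using Suc.IH t(1) by blast
  qed
  then show ?thesis using left_fractions_eq_UNIV unfolding u_def by blast
qed

lemma left_quasi_regular_principal_a: "left_quasi_regular R {r * a | r. r \<in> R}"
  unfolding left_quasi_regular_def
proof
  fix m assume "m \<in> {r * a | r. r \<in> R}"
  then obtain r where "r \<in> R" "m = r * a" by blast
  then have "inverse (1 - m) \<in> R" "1 - m \<noteq> 0"
    using inverse_one_minus_mult_a_mem mult_a_neq_1 by auto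
  then show "\<exists>v\<in>R. v * (1 - m) = 1" by (intro bexI[of _ "inverse (1 - m)"]) simp_all
qed

lemma a_mem_jacobson: "a \<in> jacobson R"
  using mem_jacobson_if_left_quasi_regular[OF R_subring a_mem left_quasi_regular_principal_a] .

lemma not_simple_ring: "\<not> simple_ring R"
proof -
  have "a \<in> {r * a | r. r \<in> R}" using subring_1[OF R_subring] by (auto intro!: exI[of _ 1])
  moreover have "1 \<notin> {r * a | r. r \<in> R}" using mult_a_neq_1 by auto
  ultimately show ?thesis
    using principal_ideal_a a_nonzero subring_1[OF R_subring] unfolding simple_ring_def by blast
qed

lemma G_domain_R: "G_domain R"
proof -
  have "a \<in> R \<inter> \<Inter> {P. prime_ideal R P \<and> P \<noteq> {0}}"
    using a_mem nonzero_prime_ideal_contains_a by blast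
  then show ?thesis unfolding G_domain_def using R_nonzero a_nonzero by auto
qed

lemma normalizer_mem_or_inverse_mem:
  assumes l: "l \<in> normalizer R"
  shows "l \<in> R \<or> inverse l \<in> R"
proof (rule ccontr)
  assume "\<not> (l \<in> R \<or> inverse l \<in> R)"
  then have notin: "l \<notin> R" "inverse l \<notin> R" by simp_all
  then have "l \<noteq> 0" using subring_0[OF R_subring] by auto
  let ?I = "{r * a | r. r \<in> R}"
  have I: "left_ideal R ?I" using principal_ideal_a unfolding two_sided_ideal_def by blast
  have one_mem: "\<exists>n. 1 \<in> left_polys ?I y n" if y: "y \<in> normalizer R" "y \<notin> R" for y
  proof -
    have "R \<subseteq> (\<Union>n. left_polys R y n)" using left_polys_0[of R y] by blast
    moreover have "y \<in> left_polys R y 1"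
      using monomial_in_left_polys[OF subring_0[OF R_subring] subring_add[OF R_subring]
          subring_1[OF R_subring], of 1 1 y] by simp
    ultimately have "(\<Union>n. left_polys R y n) = UNIV"
      using subring_psuperset_eq_UNIV[OF subring_left_polys[OF R_subring y(1)]] y(2) by blast
    then obtain n where "inverse a \<in> left_polys R y n" by blast
    then obtain c where c: "inverse a = (\<Sum>i\<le>n. c i * y ^ i)" "\<And>i. i \<le> n \<Longrightarrow> c i \<in> R"
      by (auto elim!: left_polysE)
    have "1 = a * inverse a" using a_nonzero by simp
    also have "\<dots> = (\<Sum>i\<le>n. (a * c i) * y ^ i)" unfolding c(1) by (simp add: sum_distrib_left mult.assoc)
    finally have "1 = (\<Sum>i\<le>n. (a * c i) * y ^ i)" .
    moreover have "a * c i \<in> ?I" if i: "i \<le> n" for i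
    proof -
      obtain t where "t \<in> R" "a * c i = t * a" using normalizer_commute_left[OF a_normal c(2)[OF i]] by blast
      then show ?thesis by blast
    qed
    ultimately show ?thesis using left_polysI[of n "\<lambda>i. a * c i" ?I y] by auto
  qed
  obtain n where "1 \<in> left_polys ?I l n" using one_mem l notin(1) by blast
  moreover obtain k where "1 \<in> left_polys ?I (inverse l) k"
    using one_mem normalizer_inverse[OF l] notin(2) by blast
  ultimately show False
    using one_notin_left_polys_and_inverse[OF R_subring I left_quasi_regular_principal_a \<open>l \<noteq> 0\<close>]
    by blast
qed

end

theorem theorem2p4:
  fixes R :: "'a::division_ring set" and a :: 'a
  assumes noncomm: "\<exists>x y :: 'a. x * y \<noteq> y * x"
    and maxR: "maximal_subring R"
    and aR: "a \<in> R" and a_nz: "a \<noteq> 0"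
    and a_nonunit: "\<not> (\<exists>b\<in>R. a * b = 1 \<and> b * a = 1)"
    and a_normal: "(\<lambda>r. a * r) ` R = (\<lambda>r. r * a) ` R"
  shows
    "(left_ore_set R (range (\<lambda>n. a ^ n)) \<and> right_ore_set R (range (\<lambda>n. a ^ n)) \<and>
      {inverse (a ^ n) * r | n r. r \<in> R} = UNIV \<and>
      {r * inverse (a ^ n) | n r. r \<in> R} = UNIV)
   \<and> ((\<forall>I. left_ideal R I \<and> I \<noteq> {0} \<longrightarrow> (\<exists>n. a ^ n \<in> I)) \<and>
      (\<forall>I. right_ideal R I \<and> I \<noteq> {0} \<longrightarrow> (\<exists>n. a ^ n \<in> I)) \<and>
      udim_left R = 1 \<and> udim_right R = 1 \<and> ore_domain_with_quotients_D R)
   \<and> (\<forall>P. prime_ideal R P \<and> P \<noteq> {0} \<longrightarrow> a \<in> P)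
   \<and> a \<in> jacobson R
   \<and> (\<not> simple_ring R \<and> G_domain R)
   \<and> (\<forall>l\<in>normalizer R. l \<in> R \<or> inverse l \<in> R)"
proof -
  interpret maximal_subring_normal_nonunit R a
  proof
    show "inverse a \<notin> R" using a_nonunit a_nz by auto
    show "a \<in> normalizer R" using a_normal by (simp add: normalizer_def)
  qed (fact maxR aR a_nz)+
  have "\<exists>n. a ^ n \<in> I" if "left_ideal R I \<and> I \<noteq> {0}" for I
    using left_ideal_contains_powers that by blast
  moreover have "\<exists>n. a ^ n \<in> I" if "right_ideal R I \<and> I \<noteq> {0}" for I
    using right_ideal_contains_powers that by blast
  ultimately show ?thesis
    using ore_sets_powers left_fractions_eq_UNIV right_fractions_eq_UNIV udim_left_eq_1 udim_right_eq_1 ore_domain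
      nonzero_prime_ideal_contains_a a_mem_jacobson not_simple_ring G_domain_R
      normalizer_mem_or_inverse_mem
    by blast
qed

end
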